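(* Let $k\geq 1$ and $K=J(2k+1,4)$, with Riley polynomial $\phi_K(x,y)=\lambda_k(x,y)\,\alpha_k(x,y)-1$ for the presentation $\langle a,b\mid w^2a=bw^2\rangle$, $w=(ba^{-1})^kba(b^{-1}a)^k$. Then for every $n\geq 5$, the polynomial $\phi_K(2\cos(\pi/n),y)$ has a real root $y_n>2$.
   Context: $S_n$ are the Chebyshev polynomials $S_0=1$, $S_1=z$, $S_{n+1}=zS_n-S_{n-1}$. $\lambda_k(x,y)=x^2-y-(y-2)(y+2-x^2)S_k(y)S_{k-1}(y)$ and $\alpha_k(x,y)=1+(y+2-x^2)S_{k-1}(y)\big(S_k(y)-S_{k-1}(y)\big)$. *)

theory Defs
  imports Complex_Main
begin

fun chebS :: "nat \<Rightarrow> real \<Rightarrow> real" where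
  "chebS 0 z = 1"
| "chebS (Suc 0) z = z"
| "chebS (Suc (Suc n)) z = z * chebS (Suc n) z - chebS n z"

definition lambdaK :: "nat \<Rightarrow> real \<Rightarrow> real \<Rightarrow> real" where
  "lambdaK k x y = x^2 - y - (y - 2) * (y + 2 - x^2) * chebS k y * chebS (k - 1) y"

definition alphaK :: "nat \<Rightarrow> real \<Rightarrow> real \<Rightarrow> real" where
  "alphaK k x y = 1 + (y + 2 - x^2) * chebS (k - 1) y * (chebS k y - chebS (k - 1) y)"

definition rileyJ :: "nat \<Rightarrow> real \<Rightarrow> real \<Rightarrow> real" where
  "rileyJ k x y = lambdaK k x y * alphaK k x y - 1"

end

theory Submission
  imports Defs "HOL-Analysis.Complex_Transcendental"
begin

text \<open>Evaluating at \<open>x = 2 cos (\<pi>/n)\<close>, the Riley polynomial is positive at \<open>y = 2\<close>: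
  there \<open>\<lambda>\<^sub>k = x\<^sup>2 - 2\<close> and \<open>\<alpha>\<^sub>k = 1 + k (4 - x\<^sup>2)\<close>, and \<open>x\<^sup>2 \<ge> 2.56\<close> once \<open>n \<ge> 5\<close>.
  For \<open>y > x\<^sup>2\<close> it is negative, because \<open>S\<^sub>k(y) \<ge> S\<^sub>k\<^sub>-\<^sub>1(y) \<ge> 1\<close> for \<open>y \<ge> 2\<close>
  makes \<open>\<lambda>\<^sub>k \<le> x\<^sup>2 - y < 0\<close> and \<open>\<alpha>\<^sub>k \<ge> 1\<close>. The intermediate value theorem on \<open>[2, 6]\<close>
  gives the root.\<close>

lemma isCont_chebS: "isCont (chebS n) z"
proof (induction n z rule: chebS.induct)
  case (3 n z)
  have "chebS (Suc (Suc n)) = (\<lambda>z. z * chebS (Suc n) z - chebS n z)"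
    by auto
  then show ?case
    using "3.IH" by (auto intro!: continuous_intros)
qed (auto intro!: continuous_intros)

lemma continuous_on_chebS: "continuous_on A (chebS n)"
  by (simp add: continuous_at_imp_continuous_on isCont_chebS)

lemma chebS_two: "chebS n 2 = real n + 1"
  by (induction n "2::real" rule: chebS.induct) (auto simp: algebra_simps)

lemma chebS_ge_one_and_step:
  assumes "2 \<le> y"
  shows "1 \<le> chebS n y \<and> chebS n y + 1 \<le> chebS (Suc n) y"
proof (induction n)
  case (Suc n)
  then have "0 \<le> (y - 2) * chebS (Suc n) y"
    using assms by simp
  moreover have "chebS (Suc (Suc n)) y - chebS (Suc n) y
      = (y - 2) * chebS (Suc n) y + (chebS (Suc n) y - chebS n y)"
    by (simp add: algebra_simps)
  ultimately show ?case
    using Suc by linarith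
qed (use assms in simp)

lemma chebS_ge_one: "2 \<le> y \<Longrightarrow> 1 \<le> chebS n y"
  using chebS_ge_one_and_step by blast

lemma chebS_pred_le: "2 \<le> y \<Longrightarrow> chebS (k - 1) y \<le> chebS k y"
  using chebS_ge_one_and_step[of y "k - 1"] by (cases k) auto

lemma rileyJ_at_two:
  assumes "1 \<le> k"
  shows "rileyJ k x 2 = (x\<^sup>2 - 2) * (1 + real k * (4 - x\<^sup>2)) - 1"
  using assms by (simp add: rileyJ_def lambdaK_def alphaK_def chebS_two)

lemma rileyJ_at_two_pos:
  assumes "1 \<le> k" and "64 / 25 \<le> x\<^sup>2" and "x\<^sup>2 \<le> 4"
  shows "0 < rileyJ k x 2"
proof -
  define t where "t = x\<^sup>2"
  have "(t - 2) * (1 + 1 * (4 - t)) - 1 = (t - 64 / 25) * (4 - t) + (11 / 25 * t - 19 / 25)"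
    by (simp add: field_simps)
  moreover have "0 \<le> (t - 64 / 25) * (4 - t)"
    using assms unfolding t_def by simp
  ultimately have "1 < (t - 2) * (1 + 1 * (4 - t))"
    using assms(2) unfolding t_def[symmetric] by linarith
  also have "\<dots> \<le> (t - 2) * (1 + real k * (4 - t))"
    using assms unfolding t_def by (intro mult_left_mono add_left_mono mult_right_mono) auto
  finally show ?thesis
    by (simp add: rileyJ_at_two[OF assms(1)] t_def)
qed

lemma rileyJ_neg:
  assumes "2 \<le> y" and "x\<^sup>2 < y"
  shows "rileyJ k x y < 0"
proof -
  have S: "1 \<le> chebS (k - 1) y" "chebS (k - 1) y \<le> chebS k y"
    using chebS_ge_one chebS_pred_le assms(1) by auto
  have "0 \<le> (y - 2) * (y + 2 - x\<^sup>2) * chebS k y * chebS (k - 1) y"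
    using S assms by simp
  then have lambda: "lambdaK k x y < 0"
    unfolding lambdaK_def using assms(2) by linarith
  have "0 \<le> (y + 2 - x\<^sup>2) * chebS (k - 1) y * (chebS k y - chebS (k - 1) y)"
    using S assms by simp
  then have "1 \<le> alphaK k x y"
    unfolding alphaK_def by linarith
  with lambda have "lambdaK k x y * alphaK k x y \<le> 0"
    by (simp add: mult_nonpos_nonneg)
  then show ?thesis
    unfolding rileyJ_def by linarith
qed

lemma one_minus_half_square_le_cos: "1 - x\<^sup>2 / 2 \<le> cos (x :: real)"
proof -
  have "(sin (x / 2))\<^sup>2 \<le> (x / 2)\<^sup>2"
    using abs_sin_x_le_abs_x[of "x / 2"] by (metis abs_le_square_iff)
  then show ?thesis
    using cos_double_sin[of "x / 2"] by (simp add: power_divide)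
qed

lemma cos_pi_div_ge:
  assumes "5 \<le> n"
  shows "4 / 5 \<le> cos (pi / real n)"
proof -
  have "0 \<le> pi / real n" and "pi / real n \<le> 3.15 / 5"
    using assms pi_approx by (auto simp: divide_simps)
  then have "(pi / real n)\<^sup>2 \<le> (3.15 / 5)\<^sup>2"
    using power_mono by blast
  also have "\<dots> = 0.3969"
    by (simp add: power2_eq_square)
  finally show ?thesis
    using one_minus_half_square_le_cos[of "pi / real n"] by simp
qed

theorem proposition5p2:
  fixes k n :: nat
  assumes "k \<ge> 1" and "n \<ge> 5"
  shows "\<exists>y::real. y > 2 \<and> rileyJ k (2 * cos (pi / real n)) y = 0"
proof -
  define x where "x = 2 * cos (pi / real n)"
  have "8 / 5 \<le> x" and "x \<le> 2"
    using cos_pi_div_ge[OF assms(2)] unfolding x_def by auto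
  then have x2: "64 / 25 \<le> x\<^sup>2" "x\<^sup>2 \<le> 4"
    using power_mono[of "8 / 5" x 2] power_mono[of x 2 2] by (auto simp: power2_eq_square)
  have "continuous_on {2..6} (rileyJ k x)"
    unfolding rileyJ_def lambdaK_def alphaK_def
    by (intro continuous_intros continuous_on_chebS)
  moreover have "0 < rileyJ k x 2"
    using rileyJ_at_two_pos[OF assms(1) x2] .
  moreover have "rileyJ k x 6 < 0"
    using x2 by (intro rileyJ_neg) auto
  ultimately obtain y where "2 \<le> y" "y \<le> 6" "rileyJ k x y = 0"
    using IVT2'[of "rileyJ k x" 6 0 2] by force
  then show ?thesis
    using \<open>0 < rileyJ k x 2\<close> unfolding x_def
    by (metis less_eq_real_def less_irrefl)
qed

end
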